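(* Let $\psi:\mathbb{R}^d\to\mathbb{R}$ and suppose there is $b>0$ with $|\psi(x)|\le b$ for all $x\in\mathbb{R}^d$. Suppose $x^\star$ is an exact local minimum of $\psi$, i.e. there exists $\delta>0$ with $\psi(x^\star)\le\psi(x)$ for all $x$ with $\|x-x^\star\|\le\delta$. Then for every $\epsilon>0$ there exists $\sigma^\star>0$ such that for every $0<\sigma\le\sigma^\star$, $x^\star$ is an $(\epsilon,\sigma)$-approximate local minimum of $\psi$, i.e. $\|\nabla_x\mathcal{S}(x^\star)\|\le\epsilon$ and $\lambda_{\min}(\nabla_x^2\mathcal{S}(x^\star))\ge-\sqrt{\epsilon}$, where $\mathcal{S}(x):=\mathbb{E}_{\zeta\sim N(0,I_d)}[\min(\psi(x+\sigma\zeta),\psi(x^\star))]$.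
   Context: $\lambda_{\min}$ denotes the smallest eigenvalue of a symmetric matrix; $\|\cdot\|$ is the Euclidean norm. *)

theory Defs
  imports "HOL-Probability.Probability"
begin

definition std_gauss_density :: "real ^ 'n \<Rightarrow> real" where
  "std_gauss_density z = (2 * pi) powr (- real CARD('n) / 2) * exp (- (norm z)\<^sup>2 / 2)"

definition std_gauss :: "(real ^ 'n) measure" where
  "std_gauss = density lborel (\<lambda>z. ennreal (std_gauss_density z))"

definition lambda_min :: "real ^ 'n ^ 'n \<Rightarrow> real" where
  "lambda_min H = Min {l. \<exists>v. v \<noteq> 0 \<and> H *v v = l *\<^sub>R v}"

definition smoothed_obj :: "(real ^ 'n \<Rightarrow> real) \<Rightarrow> real ^ 'n \<Rightarrow> real \<Rightarrow> real ^ 'n \<Rightarrow> real" where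
  "smoothed_obj psi xs sg x =
     (\<integral>z. min (psi (x + sg *\<^sub>R z)) (psi xs) \<partial>std_gauss)"

definition approx_local_min :: "(real ^ 'n \<Rightarrow> real) \<Rightarrow> real \<Rightarrow> real \<Rightarrow> real ^ 'n \<Rightarrow> bool" where
  "approx_local_min psi eps sg xs \<longleftrightarrow>
     (\<exists>(G :: real ^ 'n \<Rightarrow> real ^ 'n) (H :: real ^ 'n ^ 'n).
        (\<forall>\<^sub>F x in nhds xs. (smoothed_obj psi xs sg has_derivative (\<lambda>h. G x \<bullet> h)) (at x)) \<and>
        (G has_derivative (\<lambda>h. H *v h)) (at xs) \<and>
        norm (G xs) \<le> eps \<and>
        lambda_min H \<ge> - sqrt eps)"

end

theory Submission
  imports Defs
begin

text \<open>Write \<open>g y = min (psi y) (psi xs) - psi xs\<close>; it is bounded and vanishes on the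
  \<open>\<delta>\<close>-ball around \<open>xs\<close>, and the smoothed objective is a constant plus
  \<open>E[g (x + sg z)]\<close>. The substitution \<open>w = z + x / sg\<close> turns this expectation into the
  cross-correlation of the bounded function \<open>w \<mapsto> g (sg w)\<close> with the Gaussian kernel, evaluated
  at \<open>x / sg\<close>, so it may be differentiated twice under the integral sign, all derivatives falling
  on the kernel. At \<open>x = xs\<close> the integrands vanish unless \<open>norm (w - xs / sg) > \<delta> / sg\<close>,
  where the Gaussian factor is at most \<open>exp (- (\<delta> / sg)^2 / 8) = O(sg^4)\<close>. Hence the gradient
  is \<open>O(sg^3)\<close> and the Hessian entries are \<open>O(sg^2)\<close>, and the smallest eigenvalue of the
  symmetric Hessian is at least minus the sum of the absolute values of its entries.\<close>

definition entrywise_l1_norm :: "real^'m^'n \<Rightarrow> real" where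
  "entrywise_l1_norm H = (\<Sum>i\<in>UNIV. \<Sum>j\<in>UNIV. \<bar>H $ i $ j\<bar>)"

lemma inner_matrix_vector_mult_symmetric:
  fixes H :: "real^'n^'n"
  assumes "transpose H = H"
  shows "x \<bullet> (H *v y) = y \<bullet> (H *v x)"
  by (metis assms dot_lmul_matrix inner_commute transpose_matrix_vector)

lemma abs_eigenvalue_le_entrywise_l1_norm:
  fixes H :: "real^'n^'n"
  assumes eig: "H *v v = l *\<^sub>R v" and "v \<noteq> 0"
  shows "\<bar>l\<bar> \<le> entrywise_l1_norm H"
proof -
  obtain i where i: "\<And>j. \<bar>v $ j\<bar> \<le> \<bar>v $ i\<bar>"
    using ex_is_arg_min_if_finite[of UNIV "\<lambda>j. - \<bar>v $ j\<bar>"] by (auto simp: is_arg_min_def not_less)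
  have vi: "\<bar>v $ i\<bar> > 0"
  proof -
    obtain j where "v $ j \<noteq> 0" using \<open>v \<noteq> 0\<close> by (auto simp: vec_eq_iff)
    then show ?thesis using i[of j] zero_less_abs_iff[of "v $ j"] by linarith
  qed
  have "l * v $ i = (\<Sum>j\<in>UNIV. H $ i $ j * v $ j)"
    using arg_cong[OF eig, of "\<lambda>w. w $ i"] by (simp add: matrix_vector_mult_def)
  then have "\<bar>l\<bar> * \<bar>v $ i\<bar> = \<bar>\<Sum>j\<in>UNIV. H $ i $ j * v $ j\<bar>"
    by (simp add: abs_mult[symmetric])
  also have "\<dots> \<le> (\<Sum>j\<in>UNIV. \<bar>H $ i $ j\<bar> * \<bar>v $ j\<bar>)"
    unfolding abs_mult[symmetric] by (rule sum_abs)
  also have "\<dots> \<le> (\<Sum>j\<in>UNIV. \<bar>H $ i $ j\<bar>) * \<bar>v $ i\<bar>"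
    unfolding sum_distrib_right by (intro sum_mono mult_left_mono i) auto
  finally have "\<bar>l\<bar> \<le> (\<Sum>j\<in>UNIV. \<bar>H $ i $ j\<bar>)"
    using vi by simp
  also have "\<dots> \<le> entrywise_l1_norm H"
    unfolding entrywise_l1_norm_def by (rule member_le_sum) (auto intro: sum_nonneg)
  finally show ?thesis .
qed

lemma eq_0_if_linear_le_quadratic:
  fixes a B :: real
  assumes "\<And>t. 2 * t * a \<le> t\<^sup>2 * B"
  shows "a = 0"
proof -
  define D where "D = \<bar>B\<bar> + 1"
  have D: "D > 0" "B \<le> D" by (auto simp: D_def)
  have "2 * (a / D) * a \<le> (a / D)\<^sup>2 * B" by (rule assms)
  then have "2 * a\<^sup>2 * D \<le> a\<^sup>2 * B" using D by (simp add: field_simps power2_eq_square)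
  also have "\<dots> \<le> a\<^sup>2 * D" using D by (intro mult_left_mono) auto
  finally have "D * a\<^sup>2 \<le> 0" by simp
  then show "a = 0" using D by (simp add: mult_le_0_iff)
qed

lemma symmetric_matrix_has_eigenvector:
  fixes H :: "real^'n^'n"
  assumes sym: "transpose H = H"
  obtains l v where "v \<noteq> 0" "H *v v = l *\<^sub>R v"
proof -
  define Q where "Q w = w \<bullet> (H *v w)" for w :: "real^'n"
  have "continuous_on (sphere 0 1) Q"
    unfolding Q_def by (intro continuous_intros linear_continuous_on matrix_vector_mul_linear)
  moreover have "sphere (0::real^'n) 1 \<noteq> {}"
    by (metis norm_axis_1 mem_sphere_0 empty_iff)
  ultimately obtain u where u: "norm u = 1" and u_max: "\<And>w. norm w = 1 \<Longrightarrow> Q w \<le> Q u"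
    using continuous_attains_sup[OF compact_sphere] by (metis mem_sphere_0)
  define l where "l = Q u"
  have Q_le: "Q w \<le> l * (norm w)\<^sup>2" for w
  proof (cases "w = 0")
    case False
    then have "Q ((1 / norm w) *\<^sub>R w) \<le> l"
      unfolding l_def by (intro u_max) simp
    then show ?thesis
      using False by (simp add: Q_def matrix_vector_mult_scaleR field_simps power2_eq_square)
  qed (simp add: Q_def)
  \<comment> \<open>first-order condition for the maximum of the Rayleigh quotient at \<open>u\<close>\<close>
  have "w \<bullet> (H *v u - l *\<^sub>R u) = 0" for w
  proof (rule eq_0_if_linear_le_quadratic)
    fix t :: real
    have "Q (u + t *\<^sub>R w) = l + 2 * t * (w \<bullet> (H *v u)) + t\<^sup>2 * Q w"
      using inner_matrix_vector_mult_symmetric[OF sym, of u w]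
      by (simp add: Q_def l_def power2_eq_square algebra_simps)
    moreover have "(norm (u + t *\<^sub>R w))\<^sup>2 = 1 + 2 * t * (w \<bullet> u) + t\<^sup>2 * (norm w)\<^sup>2"
    proof -
      have "u \<bullet> u = 1" using u by (simp add: power2_norm_eq_inner[symmetric])
      then show ?thesis
        unfolding power2_norm_eq_inner by (simp add: inner_commute power2_eq_square algebra_simps)
    qed
    ultimately show "2 * t * (w \<bullet> (H *v u - l *\<^sub>R u)) \<le> t\<^sup>2 * (l * (norm w)\<^sup>2 - Q w)"
      using Q_le[of "u + t *\<^sub>R w"] by (simp add: algebra_simps)
  qed
  from this[of "H *v u - l *\<^sub>R u"] have "H *v u = l *\<^sub>R u" by simp
  moreover have "u \<noteq> 0" using u by auto
  ultimately show ?thesis by (rule that[rotated])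
qed

lemma finite_eigenvalues_symmetric:
  fixes H :: "real^'n^'n"
  assumes sym: "transpose H = H"
  shows "finite {l. \<exists>v. v \<noteq> 0 \<and> H *v v = l *\<^sub>R v}" (is "finite ?L")
proof -
  define eigvec where "eigvec l = (SOME v. v \<noteq> 0 \<and> H *v v = l *\<^sub>R v)" for l
  have eigvec: "eigvec l \<noteq> 0 \<and> H *v eigvec l = l *\<^sub>R eigvec l" if "l \<in> ?L" for l
  proof -
    have "\<exists>v. v \<noteq> 0 \<and> H *v v = l *\<^sub>R v" using that by simp
    then show ?thesis unfolding eigvec_def by (rule someI_ex)
  qed
  have inj: "inj_on eigvec ?L"
  proof
    fix l1 l2 assume l: "l1 \<in> ?L" "l2 \<in> ?L" and eq: "eigvec l1 = eigvec l2"
    have "l1 *\<^sub>R eigvec l2 = l2 *\<^sub>R eigvec l2"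
      using eigvec[OF l(1)] eigvec[OF l(2)] unfolding eq by simp
    then show "l1 = l2" using eigvec[OF l(2)] by simp
  qed
  have "pairwise orthogonal (eigvec ` ?L)"
    unfolding pairwise_def orthogonal_def
  proof (intro ballI impI)
    fix x y assume "x \<in> eigvec ` ?L" "y \<in> eigvec ` ?L" "x \<noteq> y"
    then obtain l1 l2 where l: "l1 \<in> ?L" "l2 \<in> ?L" "x = eigvec l1" "y = eigvec l2" "l1 \<noteq> l2"
      by (auto simp del: mem_Collect_eq)
    have "l1 * (x \<bullet> y) = y \<bullet> (H *v x)"
      using eigvec[OF l(1)] l(3) by (simp add: inner_commute)
    also have "\<dots> = x \<bullet> (H *v y)"
      by (rule inner_matrix_vector_mult_symmetric[OF sym])
    also have "\<dots> = l2 * (x \<bullet> y)"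
      using eigvec[OF l(2)] l(4) by simp
    finally show "x \<bullet> y = 0" using l(5) by simp
  qed
  moreover have "0 \<notin> eigvec ` ?L"
  proof
    assume "0 \<in> eigvec ` ?L"
    then obtain l where "l \<in> ?L" "eigvec l = 0" by (rule imageE) simp
    then show False using eigvec by simp
  qed
  ultimately have "independent (eigvec ` ?L)" by (rule pairwise_orthogonal_independent)
  then have "finite (eigvec ` ?L)" by (rule finiteI_independent)
  then show ?thesis using inj by (rule finite_imageD)
qed

lemma lambda_min_ge_neg_entrywise_l1_norm:
  fixes H :: "real^'n^'n"
  assumes "transpose H = H"
  shows "- entrywise_l1_norm H \<le> lambda_min H"
proof -
  let ?L = "{l. \<exists>v. v \<noteq> 0 \<and> H *v v = l *\<^sub>R v}"
  have "finite ?L" using assms by (rule finite_eigenvalues_symmetric)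
  moreover have "?L \<noteq> {}" using symmetric_matrix_has_eigenvector[OF assms] by blast
  moreover have "- entrywise_l1_norm H \<le> l" if "l \<in> ?L" for l
    using that abs_eigenvalue_le_entrywise_l1_norm by fastforce
  ultimately show ?thesis unfolding lambda_min_def by simp
qed

lemma integrable_exp_neg_sq_div:
  fixes a :: real
  assumes "a > 0"
  shows "integrable lborel (\<lambda>t::real. exp (- t\<^sup>2 / a))"
proof -
  define \<sigma> where "\<sigma> = sqrt (a / 2)"
  have \<sigma>: "\<sigma> > 0" "2 * \<sigma>\<^sup>2 = a" using assms by (simp_all add: \<sigma>_def)
  have "exp (- t\<^sup>2 / a) = sqrt (2 * pi * \<sigma>\<^sup>2) * normal_density 0 \<sigma> t" for t
    using \<sigma> by (simp add: normal_density_def)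
  then show ?thesis
    using \<sigma> by simp
qed

lemma integrable_exp_neg_norm_sq_div:
  assumes "a > 0"
  shows "integrable lborel (\<lambda>v::'a::euclidean_space. exp (- (norm v)\<^sup>2 / a))"
proof (subst integrable_iff_bounded, intro conjI)
  show "(\<lambda>v::'a. exp (- (norm v)\<^sup>2 / a)) \<in> borel_measurable lborel" by measurable
  have product: "exp (- (norm v)\<^sup>2 / a) = (\<Prod>b\<in>Basis. exp (- (v \<bullet> b)\<^sup>2 / a))" for v :: 'a
  proof -
    have "(norm v)\<^sup>2 = (\<Sum>b\<in>Basis. (v \<bullet> b)\<^sup>2)"
      unfolding power2_norm_eq_inner by (subst euclidean_inner) (simp add: power2_eq_square)
    then show ?thesis by (simp add: sum_divide_distrib exp_sum flip: sum_negf)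
  qed
  have "(\<integral>\<^sup>+ v. ennreal (norm (exp (- (norm v)\<^sup>2 / a))) \<partial>(lborel::'a measure))
        = (\<integral>\<^sup>+ v. (\<Prod>b\<in>Basis. ennreal (exp (- (v \<bullet> b)\<^sup>2 / a))) \<partial>(lborel::'a measure))"
    unfolding product by (intro nn_integral_cong) (simp add: prod_ennreal abs_prod)
  also have "\<dots> = (\<Prod>b\<in>(Basis::'a set). \<integral>\<^sup>+ t. ennreal (exp (- t\<^sup>2 / a)) \<partial>lborel)"
    by (rule nn_integral_lborel_prod) auto
  also have "\<dots> < \<infinity>"
    using integrable_exp_neg_sq_div[OF assms]
    by (simp add: integrable_iff_bounded less_top[symmetric] ennreal_prod_eq_top power_eq_top_ennreal)
  finally show "(\<integral>\<^sup>+ v. ennreal (norm (exp (- (norm v)\<^sup>2 / a))) \<partial>(lborel::'a measure)) < \<infinity>" .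
qed

lemma
  fixes f :: "'a::euclidean_space \<Rightarrow> real"
  assumes "integrable lborel f"
  shows integrable_translate_lborel: "integrable lborel (\<lambda>w. f (w - c))"
    and integral_translate_lborel: "(\<integral>w. f (w - c) \<partial>lborel) = (\<integral>w. f w \<partial>lborel)"
proof -
  have m: "f \<in> borel_measurable borel" using assms by (simp add: borel_measurable_integrable)
  have shift: "(\<lambda>w. f (w - c)) = (\<lambda>w. f (- c + w))" by (simp add: algebra_simps)
  have "integrable (distr lborel borel ((+) (- c))) f" using assms by (simp add: lborel_distr_plus)
  then show "integrable lborel (\<lambda>w. f (w - c))"
    unfolding shift by (subst (asm) integrable_distr_eq) (use m in auto)
  have "(\<integral>w. f w \<partial>lborel) = (\<integral>w. f w \<partial>distr lborel borel ((+) (- c)))"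
    by (simp add: lborel_distr_plus)
  also have "\<dots> = (\<integral>w. f (w - c) \<partial>lborel)"
    unfolding shift by (rule integral_distr) (use m in auto)
  finally show "(\<integral>w. f (w - c) \<partial>lborel) = (\<integral>w. f w \<partial>lborel)" by simp
qed

definition cross_corr :: "('a::euclidean_space \<Rightarrow> real) \<Rightarrow> ('a \<Rightarrow> real) \<Rightarrow> 'a \<Rightarrow> real" where
  "cross_corr h k a = (\<integral>w. h w * k (w - a) \<partial>lborel)"

lemma integrable_bounded_mult_translate:
  fixes h k P :: "'a::euclidean_space \<Rightarrow> real"
  assumes "h \<in> borel_measurable borel" and h_le: "\<And>w. \<bar>h w\<bar> \<le> B"
    and "k \<in> borel_measurable borel" and "integrable lborel P" and k_le: "\<And>v. \<bar>k v\<bar> \<le> P v"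
  shows "integrable lborel (\<lambda>w. h w * k (w - a))"
proof (rule Bochner_Integration.integrable_bound)
  show "integrable lborel (\<lambda>w. B * P (w - a))"
    using assms(4) by (intro integrable_mult_right integrable_translate_lborel)
  show "(\<lambda>w. h w * k (w - a)) \<in> borel_measurable lborel"
    using assms(1,3) by measurable
  have "0 \<le> B" using h_le[of 0] by linarith
  then have "\<bar>h w * k (w - a)\<bar> \<le> B * P (w - a)" for w
    unfolding abs_mult using h_le k_le by (intro mult_mono) auto
  then show "AE w in lborel. norm (h w * k (w - a)) \<le> norm (B * P (w - a))"
    by (intro AE_I2) (simp add: order_trans[OF _ abs_ge_self])
qed

lemma has_derivative_if_quadratic_remainder:
  fixes f :: "'a::real_normed_vector \<Rightarrow> 'b::real_normed_vector"
  assumes "bounded_linear L" and "r > 0"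
    and remainder: "\<And>y. norm (y - x) \<le> r \<Longrightarrow> norm (f y - f x - L (y - x)) \<le> C * (norm (y - x))\<^sup>2"
  shows "(f has_derivative L) (at x)"
  unfolding has_derivative_at'
proof (intro conjI allI impI \<open>bounded_linear L\<close>)
  fix e :: real assume "e > 0"
  define d where "d = min r (e / (\<bar>C\<bar> + 1))"
  show "\<exists>d>0. \<forall>y. 0 < norm (y - x) \<and> norm (y - x) < d \<longrightarrow>
          norm (f y - f x - L (y - x)) / norm (y - x) < e"
  proof (intro exI[of _ d] conjI allI impI)
    show "d > 0" using \<open>r > 0\<close> \<open>e > 0\<close> by (simp add: d_def)
    fix y assume y: "0 < norm (y - x) \<and> norm (y - x) < d"
    then have "norm (f y - f x - L (y - x)) / norm (y - x) \<le> C * norm (y - x)"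
      using remainder[of y] by (simp add: d_def divide_le_eq power2_eq_square mult.assoc)
    also have "\<dots> \<le> \<bar>C\<bar> * (e / (\<bar>C\<bar> + 1))"
      using y by (intro mult_mono) (auto simp: d_def)
    also have "\<dots> < e"
      using \<open>e > 0\<close> by (simp add: field_simps)
    finally show "norm (f y - f x - L (y - x)) / norm (y - x) < e" .
  qed
qed

locale taylor_kernel =
  fixes k :: "real^'n \<Rightarrow> real" and dk :: "real^'n \<Rightarrow> real^'n" and P :: "real^'n \<Rightarrow> real"
  assumes kernel_measurable: "k \<in> borel_measurable borel"
    and grad_measurable: "\<And>i. (\<lambda>v. dk v $ i) \<in> borel_measurable borel"
    and envelope_integrable: "integrable lborel P"
    and kernel_le_envelope: "\<And>v. \<bar>k v\<bar> \<le> P v"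
    and grad_le_envelope: "\<And>v i. \<bar>dk v $ i\<bar> \<le> P v"
    and taylor_remainder: "\<And>v s. norm s \<le> 1 \<Longrightarrow> \<bar>k (v - s) - k v + dk v \<bullet> s\<bar> \<le> (norm s)\<^sup>2 * P v"
begin

context
  fixes h :: "real^'n \<Rightarrow> real" and B :: real
  assumes h_measurable: "h \<in> borel_measurable borel" and h_le: "\<And>w. \<bar>h w\<bar> \<le> B"
begin

lemma integrable_kernel: "integrable lborel (\<lambda>w. h w * k (w - a))"
  using h_measurable h_le kernel_measurable envelope_integrable kernel_le_envelope
  by (rule integrable_bounded_mult_translate)

lemma integrable_grad: "integrable lborel (\<lambda>w. h w * (dk (w - a) $ i))"
  using h_measurable h_le grad_measurable envelope_integrable grad_le_envelope
  by (rule integrable_bounded_mult_translate)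

lemma cross_corr_grad_inner:
  shows "integrable lborel (\<lambda>w. h w * (dk (w - a) \<bullet> s))"
    and "(\<chi> i. cross_corr h (\<lambda>v. dk v $ i) a) \<bullet> s = (\<integral>w. h w * (dk (w - a) \<bullet> s) \<partial>lborel)"
proof -
  have expand: "h w * (dk (w - a) \<bullet> s) = (\<Sum>i\<in>UNIV. h w * (dk (w - a) $ i) * s $ i)" for w
    by (simp add: inner_vec_def sum_distrib_left mult.assoc)
  show "integrable lborel (\<lambda>w. h w * (dk (w - a) \<bullet> s))"
    unfolding expand by (intro Bochner_Integration.integrable_sum integrable_mult_left integrable_grad)
  show "(\<chi> i. cross_corr h (\<lambda>v. dk v $ i) a) \<bullet> s = (\<integral>w. h w * (dk (w - a) \<bullet> s) \<partial>lborel)"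
    unfolding expand
    by (subst Bochner_Integration.integral_sum)
       (auto intro: integrable_grad simp: inner_vec_def cross_corr_def)
qed

lemma cross_corr_taylor_remainder:
  assumes "norm s \<le> 1"
  shows "\<bar>cross_corr h k (a + s) - cross_corr h k a + (\<chi> i. cross_corr h (\<lambda>v. dk v $ i) a) \<bullet> s\<bar>
           \<le> B * (\<integral>v. P v \<partial>lborel) * (norm s)\<^sup>2"
proof -
  define R where "R w = h w * (k (w - a - s) - k (w - a) + dk (w - a) \<bullet> s)" for w
  have R_eq: "R = (\<lambda>w. h w * k (w - (a + s)) - h w * k (w - a) + h w * (dk (w - a) \<bullet> s))"
    by (simp add: R_def fun_eq_iff algebra_simps)
  have "\<bar>cross_corr h k (a + s) - cross_corr h k a + (\<chi> i. cross_corr h (\<lambda>v. dk v $ i) a) \<bullet> s\<bar>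
        = \<bar>\<integral>w. R w \<partial>lborel\<bar>"
    unfolding cross_corr_grad_inner(2) unfolding R_eq cross_corr_def
    using integrable_kernel cross_corr_grad_inner(1) by simp
  also have "\<dots> \<le> (\<integral>w. B * (norm s)\<^sup>2 * P (w - a) \<partial>lborel)"
  proof (rule integral_abs_bound_integral)
    show "integrable lborel R"
      unfolding R_eq
      by (intro Bochner_Integration.integrable_add Bochner_Integration.integrable_diff
          integrable_kernel cross_corr_grad_inner(1))
    show "integrable lborel (\<lambda>w. B * (norm s)\<^sup>2 * P (w - a))"
      using envelope_integrable by (intro integrable_mult_right integrable_translate_lborel)
    fix w
    have "0 \<le> B" using h_le[of 0] by linarith
    then have "\<bar>R w\<bar> \<le> B * ((norm s)\<^sup>2 * P (w - a))"
      unfolding R_def abs_mult using h_le taylor_remainder[OF assms, of "w - a"] by (intro mult_mono) auto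
    then show "\<bar>R w\<bar> \<le> B * (norm s)\<^sup>2 * P (w - a)" by (simp add: mult.assoc)
  qed
  also have "\<dots> = B * (\<integral>v. P v \<partial>lborel) * (norm s)\<^sup>2"
    by (simp add: integral_translate_lborel[OF envelope_integrable] mult_ac)
  finally show ?thesis .
qed

lemma cross_corr_has_derivative:
  "(cross_corr h k has_derivative (\<lambda>y. - (\<chi> i. cross_corr h (\<lambda>v. dk v $ i) a) \<bullet> y)) (at a)"
proof (rule has_derivative_if_quadratic_remainder[where r = 1 and C = "B * (\<integral>v. P v \<partial>lborel)"])
  show "bounded_linear (\<lambda>y. - (\<chi> i. cross_corr h (\<lambda>v. dk v $ i) a) \<bullet> y)"
    by (rule bounded_linear_inner_right)
  fix y :: "real^'n" assume "norm (y - a) \<le> 1"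
  then show "norm (cross_corr h k y - cross_corr h k a - - (\<chi> i. cross_corr h (\<lambda>v. dk v $ i) a) \<bullet> (y - a))
             \<le> B * (\<integral>v. P v \<partial>lborel) * (norm (y - a))\<^sup>2"
    using cross_corr_taylor_remainder[where a = a and s = "y - a"] by simp
qed simp

end

end

definition gauss :: "real^'n \<Rightarrow> real" where
  "gauss v = exp (- (norm v)\<^sup>2 / 2)"

definition gauss_grad :: "real^'n \<Rightarrow> real^'n" where
  "gauss_grad v = - (gauss v *\<^sub>R v)"

definition gauss_coord :: "'n \<Rightarrow> real^'n \<Rightarrow> real" where
  "gauss_coord j v = gauss v * v $ j"

definition gauss_coord_grad :: "'n \<Rightarrow> real^'n \<Rightarrow> real^'n" where
  "gauss_coord_grad j v = (\<chi> i. gauss v * ((if i = j then 1 else 0) - v $ i * v $ j))"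

text \<open>The factor \<open>(1 + norm v)^3\<close> dominates every polynomial occurring in the derivatives of
  order at most two of gauss and gauss_coord; the envelope dominates that
  factor times the Gaussian, uniformly under shifts of norm at most one.\<close>

definition gauss_envelope :: "real^'n \<Rightarrow> real" where
  "gauss_envelope v = 200 * exp (- (norm v)\<^sup>2 / 8)"

lemma gauss_pos: "gauss v > 0"
  by (simp add: gauss_def)

lemma one_plus_cube_ge:
  fixes x :: real
  assumes "0 \<le> x"
  shows "1 \<le> (1 + x)^3" "x \<le> (1 + x)^3" "1 + x\<^sup>2 \<le> (1 + x)^3" "x^3 + 3 * x \<le> (1 + x)^3"
proof -
  have cube: "(1 + x)^3 = 1 + 3 * x + 3 * x\<^sup>2 + x^3"
    by (simp add: power2_eq_square power3_eq_cube algebra_simps)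
  have "0 \<le> x\<^sup>2" "0 \<le> x^3" using assms by simp_all
  then show "1 \<le> (1 + x)^3" "x \<le> (1 + x)^3" "1 + x\<^sup>2 \<le> (1 + x)^3" "x^3 + 3 * x \<le> (1 + x)^3"
    using assms unfolding cube by linarith+
qed

lemma one_plus_cube_mult_exp_le:
  fixes r :: real
  assumes "r \<ge> 0"
  shows "(1 + r)^3 * exp (- r\<^sup>2 / 2) \<le> 100 * exp (- r\<^sup>2 / 4)"
proof -
  have "- real 2 \<le> r\<^sup>2 / 4" using zero_le_power2[of r] by linarith
  then have "(1 + r\<^sup>2 / 4 / real 2) ^ 2 \<le> exp (r\<^sup>2 / 4)"
    by (rule exp_ge_one_plus_x_over_n_power_n) simp
  then have exp_ge: "(1 + r\<^sup>2 / 8)\<^sup>2 \<le> exp (r\<^sup>2 / 4)" by simp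
  have "0 \<le> r\<^sup>2 * (r - 1)\<^sup>2" by simp
  then have cube_le: "r^3 \<le> r^4 / 2 + r\<^sup>2 / 2"
    by (simp add: power2_eq_square power3_eq_cube power4_eq_xxxx algebra_simps)
  have "0 \<le> (r - 1)\<^sup>2" by simp
  then have lin_le: "3 * r \<le> 3 / 2 + 3 / 2 * r\<^sup>2"
    by (simp add: power2_eq_square algebra_simps)
  have "(1 + r)^3 = 1 + 3 * r + 3 * r\<^sup>2 + r^3"
    by (simp add: power2_eq_square power3_eq_cube algebra_simps)
  moreover have "100 * (1 + r\<^sup>2 / 8)\<^sup>2 = 100 + 25 * r\<^sup>2 + 25 / 16 * r^4"
    by (simp add: power2_eq_square power4_eq_xxxx algebra_simps)
  moreover have "0 \<le> r\<^sup>2" "0 \<le> r^4" by simp_all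
  ultimately have "(1 + r)^3 \<le> 100 * (1 + r\<^sup>2 / 8)\<^sup>2"
    using cube_le lin_le by linarith
  also have "\<dots> \<le> 100 * exp (r\<^sup>2 / 4)"
    using exp_ge by simp
  finally have "(1 + r)^3 * exp (- r\<^sup>2 / 2) \<le> 100 * exp (r\<^sup>2 / 4) * exp (- r\<^sup>2 / 2)"
    by (simp add: mult_right_mono)
  also have "\<dots> = 100 * exp (- r\<^sup>2 / 4)"
    by (simp add: mult.assoc flip: exp_add)
  finally show ?thesis .
qed

lemma one_plus_cube_mult_gauss_le: "(1 + norm v)^3 * gauss v \<le> 100 * exp (- (norm v)\<^sup>2 / 4)"
  unfolding gauss_def by (rule one_plus_cube_mult_exp_le) simp

lemma one_plus_cube_mult_gauss_le_envelope: "(1 + norm v)^3 * gauss v \<le> gauss_envelope v"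
proof -
  have "exp (- (norm v)\<^sup>2 / 4) \<le> exp (- (norm v)\<^sup>2 / 8)" by simp
  then show ?thesis
    using one_plus_cube_mult_gauss_le[of v] exp_ge_zero[of "- (norm v)\<^sup>2 / 8"]
    unfolding gauss_envelope_def by linarith
qed

lemma one_plus_cube_mult_gauss_tail:
  assumes "0 \<le> R" "R \<le> norm v"
  shows "(1 + norm v)^3 * gauss v \<le> 100 * exp (- R\<^sup>2 / 8) * exp (- (norm v)\<^sup>2 / 8)"
proof -
  have "R\<^sup>2 \<le> (norm v)\<^sup>2" using assms by (intro power_mono) auto
  then have "exp (- (norm v)\<^sup>2 / 4) \<le> exp (- R\<^sup>2 / 8) * exp (- (norm v)\<^sup>2 / 8)"
    by (simp flip: exp_add)
  then show ?thesis using one_plus_cube_mult_gauss_le[of v] by simp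
qed

lemma one_plus_cube_mult_gauss_shift:
  fixes u v :: "real^'n"
  assumes "norm (v - u) \<le> 1"
  shows "(1 + norm u)^3 * gauss u \<le> 100 * exp (1/4) * exp (- (norm v)\<^sup>2 / 8)"
proof -
  have "norm v \<le> norm u + 1" using assms norm_triangle_sub[of v u] by simp
  then have "(norm v)\<^sup>2 \<le> (norm u + 1)\<^sup>2" by (intro power_mono) auto
  also have "\<dots> \<le> 2 * (norm u)\<^sup>2 + 2"
    using sum_squares_ge_zero[of "norm u - 1" 0] by (simp add: power2_eq_square algebra_simps)
  finally have "exp (- (norm u)\<^sup>2 / 4) \<le> exp (1/4) * exp (- (norm v)\<^sup>2 / 8)"
    by (simp flip: exp_add)
  then show ?thesis using one_plus_cube_mult_gauss_le[of u] by simp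
qed

lemma taylor_remainder_01:
  fixes f f' f'' :: "real \<Rightarrow> real"
  assumes "\<And>t. 0 \<le> t \<Longrightarrow> t \<le> 1 \<Longrightarrow> (f has_real_derivative f' t) (at t)"
    and "\<And>t. 0 \<le> t \<Longrightarrow> t \<le> 1 \<Longrightarrow> (f' has_real_derivative f'' t) (at t)"
    and "\<And>t. 0 \<le> t \<Longrightarrow> t \<le> 1 \<Longrightarrow> \<bar>f'' t\<bar> \<le> M"
  shows "\<bar>f 1 - f 0 - f' 0\<bar> \<le> M / 2"
proof -
  define diff where "diff m = (if m = 0 then f else if m = 1 then f' else f'')" for m :: nat
  have "\<exists>t. 0 < t \<and> t < 1 \<and>
      f 1 = (\<Sum>m<2. diff m 0 / fact m * 1 ^ m) + diff 2 t / fact 2 * 1 ^ 2"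
  proof (rule Maclaurin)
    show "\<forall>m t. m < 2 \<and> 0 \<le> t \<and> t \<le> 1 \<longrightarrow> (diff m has_real_derivative diff (Suc m) t) (at t)"
      using assms(1,2) by (auto simp: diff_def less_2_cases_iff)
  qed (auto simp: diff_def)
  then obtain t where "0 < t" "t < 1" "f 1 = f 0 + f' 0 + f'' t / 2"
    by (auto simp: diff_def numeral_2_eq_2 lessThan_Suc)
  then show ?thesis using assms(3)[of t] by auto
qed

lemma gauss_line_taylor:
  fixes v s :: "real^'n" and f f' f'' :: "real \<Rightarrow> real"
  assumes s: "norm s \<le> 1"
    and f': "\<And>t. (f has_real_derivative f' t) (at t)"
    and f'': "\<And>t. (f' has_real_derivative f'' t) (at t)"
    and f''_le: "\<And>t. 0 \<le> t \<Longrightarrow> t \<le> 1 \<Longrightarrow>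
      \<bar>f'' t\<bar> \<le> (norm s)\<^sup>2 * ((1 + norm (v - t *\<^sub>R s))^3 * gauss (v - t *\<^sub>R s))"
  shows "\<bar>f 1 - f 0 - f' 0\<bar> \<le> (norm s)\<^sup>2 * gauss_envelope v"
proof -
  define M where "M = (norm s)\<^sup>2 * (100 * exp (1/4) * exp (- (norm v)\<^sup>2 / 8))"
  have "\<bar>f'' t\<bar> \<le> M" if "0 \<le> t" "t \<le> 1" for t
  proof -
    have "norm (v - (v - t *\<^sub>R s)) \<le> 1" using s that by (simp add: mult_le_one)
    then have "(1 + norm (v - t *\<^sub>R s))^3 * gauss (v - t *\<^sub>R s) \<le> 100 * exp (1/4) * exp (- (norm v)\<^sup>2 / 8)"
      by (rule one_plus_cube_mult_gauss_shift)
    then show ?thesis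
      unfolding M_def using f''_le[OF that] by (meson mult_left_mono order_trans zero_le_power2)
  qed
  then have "\<bar>f 1 - f 0 - f' 0\<bar> \<le> M / 2" using f' f'' by (intro taylor_remainder_01)
  also have "\<dots> = (50 * exp (1/4)) * ((norm s)\<^sup>2 * exp (- (norm v)\<^sup>2 / 8))"
    by (simp add: M_def)
  also have "\<dots> \<le> 200 * ((norm s)\<^sup>2 * exp (- (norm v)\<^sup>2 / 8))"
  proof (rule mult_right_mono)
    have "exp (1/4::real) \<le> exp 1" by simp
    then show "50 * exp (1/4) \<le> (200::real)" using exp_le by linarith
  qed simp
  also have "\<dots> = (norm s)\<^sup>2 * gauss_envelope v"
    by (simp add: gauss_envelope_def)
  finally show ?thesis .
qed

lemma gauss_line_has_derivative:
  "((\<lambda>t. gauss (v - t *\<^sub>R s)) has_real_derivative (v \<bullet> s - t * (s \<bullet> s)) * gauss (v - t *\<^sub>R s)) (at t)"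
proof -
  have line: "gauss (v - t *\<^sub>R s) = exp (- (v \<bullet> v - 2 * t * (v \<bullet> s) + t\<^sup>2 * (s \<bullet> s)) / 2)" for t
    unfolding gauss_def power2_norm_eq_inner by (simp add: inner_commute power2_eq_square algebra_simps)
  have "((\<lambda>t. exp (- (v \<bullet> v - 2 * t * (v \<bullet> s) + t\<^sup>2 * (s \<bullet> s)) / 2)) has_real_derivative
      (v \<bullet> s - t * (s \<bullet> s)) * exp (- (v \<bullet> v - 2 * t * (v \<bullet> s) + t\<^sup>2 * (s \<bullet> s)) / 2)) (at t)"
    by (auto intro!: derivative_eq_intros simp: field_simps)
  then show ?thesis unfolding line .
qed

lemma abs_inner_sq_diff_le:
  fixes u s :: "'a::real_inner"
  shows "\<bar>(u \<bullet> s)\<^sup>2 - s \<bullet> s\<bar> \<le> (norm s)\<^sup>2 * (1 + (norm u)\<^sup>2)"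
proof -
  have "\<bar>u \<bullet> s\<bar> \<le> \<bar>norm u * norm s\<bar>" using Cauchy_Schwarz_ineq2[of u s] by simp
  then have "(u \<bullet> s)\<^sup>2 \<le> (norm s)\<^sup>2 * (norm u)\<^sup>2"
    unfolding abs_le_square_iff by (simp add: power_mult_distrib mult.commute)
  moreover have "s \<bullet> s = (norm s)\<^sup>2" by (simp add: power2_norm_eq_inner)
  ultimately show ?thesis
    using zero_le_power2[of "u \<bullet> s"] zero_le_power2[of "norm s"]
    unfolding abs_le_iff distrib_left mult_1_right by linarith
qed

lemma abs_inner_sq_diff_le_one_plus_cube:
  fixes u s :: "'a::real_inner"
  shows "\<bar>(u \<bullet> s)\<^sup>2 - s \<bullet> s\<bar> \<le> (norm s)\<^sup>2 * (1 + norm u)^3"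
proof -
  have "(norm s)\<^sup>2 * (1 + (norm u)\<^sup>2) \<le> (norm s)\<^sup>2 * (1 + norm u)^3"
    using one_plus_cube_ge(3)[of "norm u"] by (intro mult_left_mono) auto
  then show ?thesis using abs_inner_sq_diff_le[of u s] by linarith
qed

lemma abs_inner_sq_diff_mult_component_le_one_plus_cube:
  fixes u s :: "real^'n"
  shows "\<bar>((u \<bullet> s)\<^sup>2 - s \<bullet> s) * u $ j - 2 * s $ j * (u \<bullet> s)\<bar> \<le> (norm s)\<^sup>2 * (1 + norm u)^3"
proof -
  have "\<bar>((u \<bullet> s)\<^sup>2 - s \<bullet> s) * u $ j - 2 * s $ j * (u \<bullet> s)\<bar>
      \<le> \<bar>(u \<bullet> s)\<^sup>2 - s \<bullet> s\<bar> * \<bar>u $ j\<bar> + 2 * (\<bar>s $ j\<bar> * \<bar>u \<bullet> s\<bar>)"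
    by (simp add: abs_mult order_trans[OF abs_triangle_ineq4])
  also have "\<dots> \<le> (norm s)\<^sup>2 * (1 + (norm u)\<^sup>2) * norm u + 2 * (norm s * (norm u * norm s))"
    using abs_inner_sq_diff_le[of u s] component_le_norm_cart[of s j] component_le_norm_cart[of u j]
      Cauchy_Schwarz_ineq2[of u s]
    by (intro add_mono mult_mono) auto
  also have "\<dots> = (norm s)\<^sup>2 * ((norm u)^3 + 3 * norm u)"
    by (simp add: power2_eq_square power3_eq_cube algebra_simps)
  also have "\<dots> \<le> (norm s)\<^sup>2 * (1 + norm u)^3"
    using one_plus_cube_ge(4)[of "norm u"] by (intro mult_left_mono) auto
  finally show ?thesis .
qed

lemma gauss_taylor:
  fixes v s :: "real^'n"
  assumes "norm s \<le> 1"
  shows "\<bar>gauss (v - s) - gauss v + gauss_grad v \<bullet> s\<bar> \<le> (norm s)\<^sup>2 * gauss_envelope v"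
proof -
  define e where "e t = gauss (v - t *\<^sub>R s)" for t
  define p where "p t = v \<bullet> s - t * (s \<bullet> s)" for t
  have p_eq: "p t = (v - t *\<^sub>R s) \<bullet> s" for t by (simp add: p_def inner_diff_left)
  have e': "(e has_real_derivative p t * e t) (at t)" for t
    unfolding e_def p_def by (rule gauss_line_has_derivative)
  have p': "(p has_real_derivative - (s \<bullet> s)) (at t)" for t
    unfolding p_def by (auto intro!: derivative_eq_intros)
  have "\<bar>e 1 - e 0 - p 0 * e 0\<bar> \<le> (norm s)\<^sup>2 * gauss_envelope v"
  proof (rule gauss_line_taylor[OF assms, where f = e and f' = "\<lambda>t. p t * e t"
        and f'' = "\<lambda>t. ((p t)\<^sup>2 - s \<bullet> s) * e t"])
    show "(e has_real_derivative p t * e t) (at t)" for t by (rule e')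
    show "((\<lambda>t. p t * e t) has_real_derivative ((p t)\<^sup>2 - s \<bullet> s) * e t) (at t)" for t
      by (auto intro!: derivative_eq_intros e' p' simp: power2_eq_square algebra_simps)
    fix t :: real
    show "\<bar>((p t)\<^sup>2 - s \<bullet> s) * e t\<bar> \<le> (norm s)\<^sup>2 * ((1 + norm (v - t *\<^sub>R s))^3 * gauss (v - t *\<^sub>R s))"
      using abs_inner_sq_diff_le_one_plus_cube[of "v - t *\<^sub>R s" s] gauss_pos[of "v - t *\<^sub>R s"]
      by (simp add: e_def p_eq abs_mult mult.assoc mult_right_mono)
  qed
  then show ?thesis by (simp add: e_def p_def gauss_grad_def algebra_simps)
qed

lemma gauss_coord_grad_inner: "gauss_coord_grad j v \<bullet> s = gauss v * (s $ j - v $ j * (v \<bullet> s))"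
proof -
  have "gauss_coord_grad j v \<bullet> s
      = (\<Sum>i\<in>UNIV. gauss v * ((if i = j then s $ i else 0) - v $ j * (v $ i * s $ i)))"
    unfolding gauss_coord_grad_def inner_vec_def by (intro sum.cong) (auto simp: algebra_simps)
  also have "\<dots> = gauss v * (\<Sum>i\<in>UNIV. (if i = j then s $ i else 0) - v $ j * (v $ i * s $ i))"
    by (simp add: sum_distrib_left)
  also have "\<dots> = gauss v * (s $ j - v $ j * (v \<bullet> s))"
    by (simp add: inner_vec_def sum_subtractf sum_distrib_left)
  finally show ?thesis .
qed

lemma gauss_coord_taylor:
  fixes v s :: "real^'n"
  assumes "norm s \<le> 1"
  shows "\<bar>gauss_coord j (v - s) - gauss_coord j v + gauss_coord_grad j v \<bullet> s\<bar>
           \<le> (norm s)\<^sup>2 * gauss_envelope v"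
proof -
  define e where "e t = gauss (v - t *\<^sub>R s)" for t
  define p where "p t = v \<bullet> s - t * (s \<bullet> s)" for t
  define q where "q t = v $ j - t * s $ j" for t
  have pq_eq: "p t = (v - t *\<^sub>R s) \<bullet> s" "q t = (v - t *\<^sub>R s) $ j" for t
    by (simp_all add: p_def q_def inner_diff_left)
  have e': "(e has_real_derivative p t * e t) (at t)" for t
    unfolding e_def p_def by (rule gauss_line_has_derivative)
  have p': "(p has_real_derivative - (s \<bullet> s)) (at t)" for t
    unfolding p_def by (auto intro!: derivative_eq_intros)
  have q': "(q has_real_derivative - s $ j) (at t)" for t
    unfolding q_def by (auto intro!: derivative_eq_intros)
  have "\<bar>e 1 * q 1 - e 0 * q 0 - (p 0 * e 0 * q 0 - s $ j * e 0)\<bar> \<le> (norm s)\<^sup>2 * gauss_envelope v"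
  proof (rule gauss_line_taylor[OF assms, where f = "\<lambda>t. e t * q t"
        and f' = "\<lambda>t. p t * e t * q t - s $ j * e t"
        and f'' = "\<lambda>t. (((p t)\<^sup>2 - s \<bullet> s) * q t - 2 * s $ j * p t) * e t"])
    show "((\<lambda>t. e t * q t) has_real_derivative p t * e t * q t - s $ j * e t) (at t)" for t
      by (auto intro!: derivative_eq_intros e' q' simp: algebra_simps)
    show "((\<lambda>t. p t * e t * q t - s $ j * e t) has_real_derivative
        (((p t)\<^sup>2 - s \<bullet> s) * q t - 2 * s $ j * p t) * e t) (at t)" for t
      by (auto intro!: derivative_eq_intros e' p' q' simp: power2_eq_square algebra_simps)
    fix t :: real
    show "\<bar>(((p t)\<^sup>2 - s \<bullet> s) * q t - 2 * s $ j * p t) * e t\<bar>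
        \<le> (norm s)\<^sup>2 * ((1 + norm (v - t *\<^sub>R s))^3 * gauss (v - t *\<^sub>R s))"
      using abs_inner_sq_diff_mult_component_le_one_plus_cube[of "v - t *\<^sub>R s" s j]
        gauss_pos[of "v - t *\<^sub>R s"]
      by (simp add: e_def pq_eq abs_mult mult.assoc mult_right_mono)
  qed
  then show ?thesis
    by (simp add: e_def p_def q_def gauss_coord_def gauss_coord_grad_inner algebra_simps)
qed

lemma abs_gauss_mult_le_envelope:
  assumes "\<bar>q\<bar> \<le> (1 + norm v)^3"
  shows "\<bar>gauss v * q\<bar> \<le> gauss_envelope v"
proof -
  have "\<bar>gauss v * q\<bar> \<le> (1 + norm v)^3 * gauss v"
    using assms gauss_pos[of v] by (simp add: abs_mult mult.commute mult_left_mono)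
  also have "\<dots> \<le> gauss_envelope v" by (rule one_plus_cube_mult_gauss_le_envelope)
  finally show ?thesis .
qed

lemma abs_component_le_one_plus_cube: "\<bar>v $ j\<bar> \<le> (1 + norm v)^3"
  using component_le_norm_cart[of v j] one_plus_cube_ge(2)[of "norm v"] by simp

lemma abs_delta_minus_products_le_one_plus_cube:
  "\<bar>(if i = j then 1 else 0) - v $ i * v $ j\<bar> \<le> (1 + norm v)^3"
proof -
  have "\<bar>v $ i * v $ j\<bar> \<le> (norm v)\<^sup>2"
    unfolding abs_mult power2_eq_square by (intro mult_mono component_le_norm_cart) auto
  moreover have "\<bar>(if i = j then 1 else 0) - v $ i * v $ j\<bar>
      \<le> \<bar>if i = j then 1 else 0 :: real\<bar> + \<bar>v $ i * v $ j\<bar>"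
    by (rule abs_triangle_ineq4)
  moreover have "\<bar>if i = j then 1 else 0 :: real\<bar> \<le> 1" by simp
  ultimately show ?thesis using one_plus_cube_ge(3)[of "norm v"] by simp
qed

lemma integrable_gauss_envelope: "integrable lborel gauss_envelope"
  unfolding gauss_envelope_def[abs_def]
  by (intro integrable_mult_right integrable_exp_neg_norm_sq_div) simp

lemma borel_measurable_gauss: "gauss \<in> borel_measurable borel"
  unfolding gauss_def[abs_def] by measurable

lemma abs_gauss_le_envelope: "\<bar>gauss v\<bar> \<le> gauss_envelope v"
  using abs_gauss_mult_le_envelope[of 1 v] one_plus_cube_ge(1)[of "norm v"] by simp

lemma taylor_kernel_gauss: "taylor_kernel (gauss :: real^'n \<Rightarrow> real) gauss_grad gauss_envelope"
proof
  show "(\<lambda>v. gauss_grad v $ i) \<in> borel_measurable borel" for i :: 'n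
    unfolding gauss_grad_def gauss_def by simp measurable
  show "\<bar>gauss_grad v $ i\<bar> \<le> gauss_envelope v" for v and i :: 'n
    using abs_gauss_mult_le_envelope[OF abs_component_le_one_plus_cube[of v i]]
    by (simp add: gauss_grad_def)
qed (simp_all add: borel_measurable_gauss integrable_gauss_envelope abs_gauss_le_envelope
    gauss_taylor)

lemma taylor_kernel_gauss_coord:
  "taylor_kernel (gauss_coord j :: real^'n \<Rightarrow> real) (gauss_coord_grad j) gauss_envelope"
proof
  show "gauss_coord j \<in> borel_measurable borel"
    unfolding gauss_coord_def[abs_def] gauss_def by measurable
  show "(\<lambda>v. gauss_coord_grad j v $ i) \<in> borel_measurable borel" for i
    unfolding gauss_coord_grad_def gauss_def by simp measurable
  show "\<bar>gauss_coord j v\<bar> \<le> gauss_envelope v" for v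
    unfolding gauss_coord_def by (intro abs_gauss_mult_le_envelope abs_component_le_one_plus_cube)
  show "\<bar>gauss_coord_grad j v $ i\<bar> \<le> gauss_envelope v" for v i
    unfolding gauss_coord_grad_def
    by (simp add: abs_gauss_mult_le_envelope abs_delta_minus_products_le_one_plus_cube)
qed (simp_all add: integrable_gauss_envelope gauss_coord_taylor)

definition has_gradient_hessian ::
  "(real^'n \<Rightarrow> real) \<Rightarrow> (real^'n \<Rightarrow> real^'n) \<Rightarrow> real^'n^'n \<Rightarrow> real^'n \<Rightarrow> bool" where
  "has_gradient_hessian f G H x \<longleftrightarrow>
     (\<forall>y. (f has_derivative (\<lambda>h. G y \<bullet> h)) (at y)) \<and> (G has_derivative (\<lambda>h. H *v h)) (at x) \<and>
     transpose H = H"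

lemma has_derivative_vec_componentwise:
  fixes F :: "real^'n \<Rightarrow> real^'m"
  assumes "\<And>j. ((\<lambda>x. F x $ j) has_derivative (\<lambda>h. L h $ j)) (at x)"
  shows "(F has_derivative L) (at x)"
proof (subst has_derivative_componentwise_within, intro ballI)
  fix b :: "real^'m" assume "b \<in> Basis"
  then obtain j where "b = axis j 1" using axis_inverse by blast
  then show "((\<lambda>x. F x \<bullet> b) has_derivative (\<lambda>h. L h \<bullet> b)) (at x within UNIV)"
    using assms[of j] by (simp add: cart_eq_inner_axis[symmetric])
qed

lemma has_gradient_hessian_affine:
  assumes "has_gradient_hessian f G H (c *\<^sub>R x)"
  shows "has_gradient_hessian (\<lambda>x. K + C * f (c *\<^sub>R x))
           (\<lambda>x. (C * c) *\<^sub>R G (c *\<^sub>R x)) ((C * c * c) *\<^sub>R H) x"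
  unfolding has_gradient_hessian_def
proof (intro conjI allI)
  have scale: "((\<lambda>x. c *\<^sub>R x) has_derivative (\<lambda>h. c *\<^sub>R h)) (at y)" for y :: "real^'n"
    by (rule has_derivative_scaleR_right[OF has_derivative_ident])
  fix y
  have "(f has_derivative (\<lambda>h. G (c *\<^sub>R y) \<bullet> h)) (at (c *\<^sub>R y))"
    using assms by (simp add: has_gradient_hessian_def)
  from has_derivative_compose[OF scale this]
  have "((\<lambda>x. K + C * f (c *\<^sub>R x)) has_derivative (\<lambda>h. 0 + C * (G (c *\<^sub>R y) \<bullet> (c *\<^sub>R h)))) (at y)"
    by (intro has_derivative_add has_derivative_const has_derivative_mult_right)
  then show "((\<lambda>x. K + C * f (c *\<^sub>R x)) has_derivative (\<lambda>h. ((C * c) *\<^sub>R G (c *\<^sub>R y)) \<bullet> h)) (at y)"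
    by (rule has_derivative_eq_rhs) (simp add: fun_eq_iff)
  have "(G has_derivative (\<lambda>h. H *v h)) (at (c *\<^sub>R x))"
    using assms by (simp add: has_gradient_hessian_def)
  from has_derivative_compose[OF scale this]
  have "((\<lambda>x. (C * c) *\<^sub>R G (c *\<^sub>R x)) has_derivative (\<lambda>h. (C * c) *\<^sub>R (H *v (c *\<^sub>R h)))) (at x)"
    by (rule has_derivative_scaleR_right)
  then show "((\<lambda>x. (C * c) *\<^sub>R G (c *\<^sub>R x)) has_derivative (\<lambda>h. ((C * c * c) *\<^sub>R H) *v h)) (at x)"
    by (rule has_derivative_eq_rhs)
       (simp add: fun_eq_iff scaleR_matrix_vector_assoc matrix_vector_mult_scaleR)
  show "transpose ((C * c * c) *\<^sub>R H) = (C * c * c) *\<^sub>R H"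
    using assms by (simp add: has_gradient_hessian_def transpose_scalar)
qed

lemma approx_local_min_if_gradient_hessian_small:
  assumes "has_gradient_hessian (smoothed_obj psi xs sg) G H xs"
    and "norm (G xs) \<le> eps" and "entrywise_l1_norm H \<le> sqrt eps"
  shows "approx_local_min psi eps sg xs"
proof -
  have "- sqrt eps \<le> lambda_min H"
    using assms lambda_min_ge_neg_entrywise_l1_norm[of H] by (simp add: has_gradient_hessian_def)
  then show ?thesis
    using assms unfolding approx_local_min_def has_gradient_hessian_def
    by (intro exI[of _ G] exI[of _ H]) (simp add: always_eventually)
qed

lemma cross_corr_gauss_has_gradient_hessian:
  fixes h :: "real^'n \<Rightarrow> real"
  assumes "h \<in> borel_measurable borel" and "\<And>w. \<bar>h w\<bar> \<le> B"
  shows "has_gradient_hessian (cross_corr h gauss) (\<lambda>a. \<chi> j. cross_corr h (gauss_coord j) a)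
           (\<chi> j i. - cross_corr h (\<lambda>v. gauss_coord_grad j v $ i) a) a"
  unfolding has_gradient_hessian_def
proof (intro conjI allI)
  fix y :: "real^'n"
  have "- (\<chi> i. cross_corr h (\<lambda>v. gauss_grad v $ i) y) = (\<chi> j. cross_corr h (gauss_coord j) y)"
    by (simp add: vec_eq_iff cross_corr_def gauss_grad_def gauss_coord_def)
  then show "(cross_corr h gauss has_derivative (\<lambda>z. (\<chi> j. cross_corr h (gauss_coord j) y) \<bullet> z)) (at y)"
    using taylor_kernel.cross_corr_has_derivative[OF taylor_kernel_gauss assms, of y] by simp
next
  show "((\<lambda>a. \<chi> j. cross_corr h (gauss_coord j) a) has_derivative
      (\<lambda>z. (\<chi> j i. - cross_corr h (\<lambda>v. gauss_coord_grad j v $ i) a) *v z)) (at a)"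
  proof (rule has_derivative_vec_componentwise)
    fix j
    show "((\<lambda>x. (\<chi> j. cross_corr h (gauss_coord j) x) $ j) has_derivative
        (\<lambda>z. ((\<chi> j i. - cross_corr h (\<lambda>v. gauss_coord_grad j v $ i) a) *v z) $ j)) (at a)"
      using taylor_kernel.cross_corr_has_derivative[OF taylor_kernel_gauss_coord assms, of j a]
      by (simp add: matrix_vector_mult_def inner_vec_def sum_negf)
  qed
next
  show "transpose (\<chi> j i. - cross_corr h (\<lambda>v. gauss_coord_grad j v $ i) a)
      = (\<chi> j i. - cross_corr h (\<lambda>v. gauss_coord_grad j v $ i) a)"
    by (simp add: transpose_def vec_eq_iff gauss_coord_grad_def mult.commute eq_commute)
qed

lemma cross_corr_gauss_tail:
  fixes h q :: "real^'n \<Rightarrow> real"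
  assumes h_measurable: "h \<in> borel_measurable borel" and h_le: "\<And>w. \<bar>h w\<bar> \<le> B"
    and h_vanishes: "\<And>w. norm (w - a) \<le> r \<Longrightarrow> h w = 0" and "0 \<le> r"
    and q_measurable: "q \<in> borel_measurable borel" and q_le: "\<And>v. \<bar>q v\<bar> \<le> (1 + norm v)^3"
  shows "\<bar>cross_corr h (\<lambda>v. gauss v * q v) a\<bar>
           \<le> B * 100 * exp (- r\<^sup>2 / 8) * (\<integral>v. exp (- (norm (v::real^'n))\<^sup>2 / 8) \<partial>lborel)"
proof -
  have B: "0 \<le> B" using h_le[of 0] by linarith
  have exp8: "integrable lborel (\<lambda>v::real^'n. exp (- (norm v)\<^sup>2 / 8))"
    by (rule integrable_exp_neg_norm_sq_div) simp
  have "\<bar>cross_corr h (\<lambda>v. gauss v * q v) a\<bar>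
      \<le> (\<integral>w. B * 100 * exp (- r\<^sup>2 / 8) * exp (- (norm (w - a))\<^sup>2 / 8) \<partial>lborel)"
    unfolding cross_corr_def
  proof (rule integral_abs_bound_integral)
    show "integrable lborel (\<lambda>w. h w * (gauss (w - a) * q (w - a)))"
      using h_measurable h_le _ integrable_gauss_envelope
    proof (rule integrable_bounded_mult_translate)
      show "(\<lambda>v. gauss v * q v) \<in> borel_measurable borel"
        using borel_measurable_gauss q_measurable by measurable
      show "\<bar>gauss v * q v\<bar> \<le> gauss_envelope v" for v
        using q_le by (rule abs_gauss_mult_le_envelope)
    qed
    show "integrable lborel (\<lambda>w. B * 100 * exp (- r\<^sup>2 / 8) * exp (- (norm (w - a))\<^sup>2 / 8))"
      using integrable_translate_lborel[OF exp8] by (rule integrable_mult_right)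
    fix w
    show "\<bar>h w * (gauss (w - a) * q (w - a))\<bar> \<le> B * 100 * exp (- r\<^sup>2 / 8) * exp (- (norm (w - a))\<^sup>2 / 8)"
    proof (cases "norm (w - a) \<le> r")
      case False
      have "\<bar>gauss (w - a) * q (w - a)\<bar> \<le> (1 + norm (w - a))^3 * gauss (w - a)"
        using q_le[of "w - a"] gauss_pos[of "w - a"] by (simp add: abs_mult mult.commute mult_left_mono)
      also have "\<dots> \<le> 100 * exp (- r\<^sup>2 / 8) * exp (- (norm (w - a))\<^sup>2 / 8)"
        using False \<open>0 \<le> r\<close> by (intro one_plus_cube_mult_gauss_tail) auto
      finally show ?thesis
        unfolding abs_mult[of "h w"] mult.assoc using h_le B by (intro mult_mono) auto
    qed (use B h_vanishes in simp)
  qed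
  also have "\<dots> = B * 100 * exp (- r\<^sup>2 / 8) * (\<integral>v. exp (- (norm (v::real^'n))\<^sup>2 / 8) \<partial>lborel)"
    using integral_translate_lborel[OF exp8, of a] by simp
  finally show ?thesis .
qed

lemma cross_corr_gauss_derivatives_tail:
  fixes h :: "real^'n \<Rightarrow> real"
  assumes h_measurable: "h \<in> borel_measurable borel" and h_le: "\<And>w. \<bar>h w\<bar> \<le> B"
    and h_vanishes: "\<And>w. norm (w - a) \<le> r \<Longrightarrow> h w = 0" and "0 \<le> r"
  defines "T \<equiv> B * 100 * exp (- r\<^sup>2 / 8) * (\<integral>v. exp (- (norm (v::real^'n))\<^sup>2 / 8) \<partial>lborel)"
  shows "\<bar>cross_corr h (gauss_coord j) a\<bar> \<le> T"
    and "\<bar>cross_corr h (\<lambda>v. gauss_coord_grad i v $ j) a\<bar> \<le> T"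
proof -
  have "\<bar>cross_corr h (\<lambda>v. gauss v * v $ j) a\<bar> \<le> T"
    unfolding T_def using h_measurable h_le h_vanishes \<open>0 \<le> r\<close>
    by (rule cross_corr_gauss_tail) (measurable, rule abs_component_le_one_plus_cube)
  then show "\<bar>cross_corr h (gauss_coord j) a\<bar> \<le> T"
    by (simp add: gauss_coord_def[abs_def])
  have "\<bar>cross_corr h (\<lambda>v. gauss v * ((if j = i then 1 else 0) - v $ j * v $ i)) a\<bar> \<le> T"
    unfolding T_def using h_measurable h_le h_vanishes \<open>0 \<le> r\<close>
    by (rule cross_corr_gauss_tail) (measurable, rule abs_delta_minus_products_le_one_plus_cube)
  then show "\<bar>cross_corr h (\<lambda>v. gauss_coord_grad i v $ j) a\<bar> \<le> T"
    by (simp add: gauss_coord_grad_def)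
qed

lemma integrable_gauss: "integrable lborel gauss"
  unfolding gauss_def[abs_def] by (rule integrable_exp_neg_norm_sq_div) simp

lemma
  fixes g :: "real^'n \<Rightarrow> real"
  assumes g_measurable: "g \<in> borel_measurable borel" and g_le: "\<And>y. \<bar>g y\<bar> \<le> B" and "sg > 0"
  shows integrable_gauss_shift: "integrable lborel (\<lambda>z. g (x + sg *\<^sub>R z) * gauss z)"
    and integral_gauss_shift_eq_cross_corr: "(\<integral>z. g (x + sg *\<^sub>R z) * gauss z \<partial>lborel)
      = cross_corr (\<lambda>w. g (sg *\<^sub>R w)) gauss ((1 / sg) *\<^sub>R x)"
proof -
  have "integrable lborel (\<lambda>z. g (x + sg *\<^sub>R z) * gauss (z - 0))"
  proof (rule integrable_bounded_mult_translate[where B = B and P = gauss_envelope])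
    show "(\<lambda>z. g (x + sg *\<^sub>R z)) \<in> borel_measurable borel"
      using g_measurable by measurable
  qed (simp_all add: g_le borel_measurable_gauss integrable_gauss_envelope abs_gauss_le_envelope)
  then show integrable: "integrable lborel (\<lambda>z. g (x + sg *\<^sub>R z) * gauss z)" by simp
  have "(\<integral>z. g (x + sg *\<^sub>R z) * gauss z \<partial>lborel)
      = (\<integral>w. g (x + sg *\<^sub>R (w - (1 / sg) *\<^sub>R x)) * gauss (w - (1 / sg) *\<^sub>R x) \<partial>lborel)"
    by (rule integral_translate_lborel[OF integrable, symmetric])
  also have "\<dots> = cross_corr (\<lambda>w. g (sg *\<^sub>R w)) gauss ((1 / sg) *\<^sub>R x)"
    unfolding cross_corr_def using \<open>sg > 0\<close> by (simp add: scaleR_diff_right)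
  finally show "(\<integral>z. g (x + sg *\<^sub>R z) * gauss z \<partial>lborel)
      = cross_corr (\<lambda>w. g (sg *\<^sub>R w)) gauss ((1 / sg) *\<^sub>R x)" .
qed

lemma smoothed_obj_eq_cross_corr:
  fixes psi :: "real^'n \<Rightarrow> real"
  assumes measurable: "(\<lambda>y. min (psi y) (psi xs)) \<in> borel_measurable borel"
    and psi_le: "\<And>y. \<bar>psi y\<bar> \<le> b" and "sg > 0"
  shows "smoothed_obj psi xs sg x = (\<integral>z. std_gauss_density (z::real^'n) * psi xs \<partial>lborel)
     + (2 * pi) powr (- real CARD('n) / 2)
       * cross_corr (\<lambda>w. min (psi (sg *\<^sub>R w)) (psi xs) - psi xs) gauss ((1 / sg) *\<^sub>R x)"
proof -
  define g where "g y = min (psi y) (psi xs) - psi xs" for y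
  define C :: real where "C = (2 * pi) powr (- real CARD('n) / 2)"
  have g_measurable: "g \<in> borel_measurable borel"
    using measurable unfolding g_def by measurable
  have g_le: "\<bar>g y\<bar> \<le> 2 * b" for y
    using psi_le[of y] psi_le[of xs] by (auto simp: g_def min_def abs_le_iff)
  have density: "(std_gauss_density :: real^'n \<Rightarrow> real) = (\<lambda>z. C * gauss z)"
    by (simp add: fun_eq_iff std_gauss_density_def gauss_def C_def)
  have "smoothed_obj psi xs sg x = (\<integral>z. std_gauss_density z * min (psi (x + sg *\<^sub>R z)) (psi xs) \<partial>lborel)"
  proof -
    have "(std_gauss_density :: real^'n \<Rightarrow> real) \<in> borel_measurable borel"
      unfolding density using borel_measurable_gauss by measurable
    then show ?thesis
      unfolding smoothed_obj_def std_gauss_def using measurable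
      by (subst integral_density) (auto simp: std_gauss_density_def)
  qed
  also have "\<dots> = (\<integral>z. C * (g (x + sg *\<^sub>R z) * gauss z) + std_gauss_density z * psi xs \<partial>lborel)"
    by (simp add: density g_def algebra_simps)
  also have "\<dots> = (\<integral>z. C * (g (x + sg *\<^sub>R z) * gauss z) \<partial>lborel)
      + (\<integral>z. std_gauss_density (z::real^'n) * psi xs \<partial>lborel)"
    using integrable_gauss_shift[OF g_measurable g_le \<open>sg > 0\<close>, of x] integrable_gauss
    by (intro Bochner_Integration.integral_add) (auto simp: density)
  also have "(\<integral>z. C * (g (x + sg *\<^sub>R z) * gauss z) \<partial>lborel)
      = C * cross_corr (\<lambda>w. g (sg *\<^sub>R w)) gauss ((1 / sg) *\<^sub>R x)"
    by (simp add: integral_gauss_shift_eq_cross_corr[OF g_measurable g_le \<open>sg > 0\<close>])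
  finally show ?thesis by (simp add: g_def C_def add.commute)
qed

text \<open>Without measurability the integrand of the smoothed objective is not integrable, so the
  objective is identically \<open>0\<close>, the value of the Bochner integral of a non-integrable function.\<close>

lemma has_gradient_hessian_smoothed_obj_if_not_measurable:
  fixes psi :: "real^'n \<Rightarrow> real"
  assumes not_measurable: "(\<lambda>y. min (psi y) (psi xs)) \<notin> borel_measurable borel" and "sg > 0"
  shows "has_gradient_hessian (smoothed_obj psi xs sg) (\<lambda>_. 0) 0 xs"
proof -
  have "\<not> integrable std_gauss (\<lambda>z. min (psi (x + sg *\<^sub>R z)) (psi xs))" for x
  proof
    assume "integrable std_gauss (\<lambda>z. min (psi (x + sg *\<^sub>R z)) (psi xs))"
    then have "(\<lambda>z. min (psi (x + sg *\<^sub>R z)) (psi xs)) \<in> borel_measurable borel"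
      using borel_measurable_integrable measurable_cong_sets[of std_gauss borel borel borel]
      by (simp add: std_gauss_def)
    then have "(\<lambda>y. min (psi (x + sg *\<^sub>R ((1 / sg) *\<^sub>R (y - x)))) (psi xs)) \<in> borel_measurable borel"
      by measurable
    then show False using not_measurable \<open>sg > 0\<close> by simp
  qed
  then have "smoothed_obj psi xs sg = (\<lambda>_. 0)"
    unfolding smoothed_obj_def by (simp add: fun_eq_iff not_integrable_integral_eq)
  then show ?thesis
    by (simp add: has_gradient_hessian_def transpose_def vec_eq_iff)
qed

lemma min_diff_eq_0_near_local_min:
  fixes psi :: "'a::real_normed_vector \<Rightarrow> real"
  assumes local_min: "\<And>y. norm (y - xs) \<le> \<delta> \<Longrightarrow> psi xs \<le> psi y"
    and "sg > 0" and "norm (w - (1 / sg) *\<^sub>R xs) \<le> \<delta> / sg"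
  shows "min (psi (sg *\<^sub>R w)) (psi xs) - psi xs = 0"
proof -
  have "sg *\<^sub>R w - xs = sg *\<^sub>R (w - (1 / sg) *\<^sub>R xs)"
    using \<open>sg > 0\<close> by (simp add: scaleR_diff_right)
  then have "norm (sg *\<^sub>R w - xs) = sg * norm (w - (1 / sg) *\<^sub>R xs)"
    using \<open>sg > 0\<close> by simp
  then have "norm (sg *\<^sub>R w - xs) \<le> \<delta>"
    using assms(3) \<open>sg > 0\<close> by (simp add: field_simps)
  then have "psi xs \<le> psi (sg *\<^sub>R w)" by (rule local_min)
  then show ?thesis by (simp add: min_absorb2)
qed

lemma smoothed_obj_gradient_hessian_tail:
  fixes psi :: "real^'n \<Rightarrow> real" and xs :: "real^'n"
  assumes measurable: "(\<lambda>y. min (psi y) (psi xs)) \<in> borel_measurable borel"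
    and psi_le: "\<And>y. \<bar>psi y\<bar> \<le> b" and "\<delta> > 0"
    and local_min: "\<And>y. norm (y - xs) \<le> \<delta> \<Longrightarrow> psi xs \<le> psi y" and "sg > 0"
  defines "T \<equiv> (2 * pi) powr (- real CARD('n) / 2) * (2 * b) * 100
                 * (\<integral>v. exp (- (norm (v::real^'n))\<^sup>2 / 8) \<partial>lborel) * exp (- (\<delta> / sg)\<^sup>2 / 8)"
  obtains G H where "has_gradient_hessian (smoothed_obj psi xs sg) G H xs"
    and "\<And>j. \<bar>G xs $ j\<bar> \<le> T / sg" and "\<And>i j. \<bar>H $ i $ j\<bar> \<le> T / sg\<^sup>2"
proof -
  define C :: real where "C = (2 * pi) powr (- real CARD('n) / 2)"
  define h where "h w = min (psi (sg *\<^sub>R w)) (psi xs) - psi xs" for w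
  define a where "a = (1 / sg) *\<^sub>R xs"
  have h_measurable: "h \<in> borel_measurable borel"
    using measurable unfolding h_def by measurable
  have h_le: "\<bar>h w\<bar> \<le> 2 * b" for w
    using psi_le[of "sg *\<^sub>R w"] psi_le[of xs] by (auto simp: h_def min_def abs_le_iff)
  have h_vanishes: "h w = 0" if "norm (w - a) \<le> \<delta> / sg" for w
    unfolding h_def by (rule min_diff_eq_0_near_local_min) (use local_min \<open>sg > 0\<close> that a_def in auto)
  define G0 where "G0 y = (\<chi> j. cross_corr h (gauss_coord j) y)" for y
  define H0 where "H0 = (\<chi> j i. - cross_corr h (\<lambda>v. gauss_coord_grad j v $ i) a)"
  have "has_gradient_hessian (cross_corr h gauss) G0 H0 ((1 / sg) *\<^sub>R xs)"
    unfolding G0_def H0_def a_def using h_measurable h_le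
    by (rule cross_corr_gauss_has_gradient_hessian)
  moreover have "smoothed_obj psi xs sg = (\<lambda>x. (\<integral>z. std_gauss_density (z::real^'n) * psi xs \<partial>lborel)
      + C * cross_corr h gauss ((1 / sg) *\<^sub>R x))"
    using smoothed_obj_eq_cross_corr[OF measurable psi_le \<open>sg > 0\<close>]
    by (simp add: fun_eq_iff C_def h_def[abs_def])
  ultimately have "has_gradient_hessian (smoothed_obj psi xs sg)
      (\<lambda>x. (C * (1 / sg)) *\<^sub>R G0 ((1 / sg) *\<^sub>R x)) ((C * (1 / sg) * (1 / sg)) *\<^sub>R H0) xs"
    by (simp only:) (rule has_gradient_hessian_affine)
  then show thesis
  proof (rule that)
    have "C > 0" by (simp add: C_def)
    have "0 \<le> \<delta> / sg" using \<open>\<delta> > 0\<close> \<open>sg > 0\<close> by simp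
    note tail = cross_corr_gauss_derivatives_tail[where a = a and r = "\<delta> / sg",
        OF h_measurable h_le h_vanishes this]
    fix i j
    have "C * \<bar>cross_corr h (gauss_coord j) a\<bar> \<le> T"
      using tail(1)[where j = j] \<open>C > 0\<close> by (simp add: T_def C_def mult_ac)
    then show "\<bar>((\<lambda>x. (C * (1 / sg)) *\<^sub>R G0 ((1 / sg) *\<^sub>R x)) xs) $ j\<bar> \<le> T / sg"
      using \<open>C > 0\<close> \<open>sg > 0\<close> by (simp add: G0_def a_def abs_mult field_simps)
    have "C * \<bar>cross_corr h (\<lambda>v. gauss_coord_grad i v $ j) a\<bar> \<le> T"
      using tail(2)[where i = i and j = j] \<open>C > 0\<close> by (simp add: T_def C_def mult_ac)
    then show "\<bar>((C * (1 / sg) * (1 / sg)) *\<^sub>R H0) $ i $ j\<bar> \<le> T / sg\<^sup>2"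
      using \<open>C > 0\<close> \<open>sg > 0\<close> by (simp add: H0_def abs_mult field_simps power2_eq_square)
  qed
qed

lemma norm_le_card_mult:
  fixes x :: "real^'n"
  assumes "\<And>i. \<bar>x $ i\<bar> \<le> T"
  shows "norm x \<le> real CARD('n) * T"
proof -
  have "norm x \<le> (\<Sum>i\<in>UNIV. \<bar>x $ i\<bar>)" by (rule norm_le_l1_cart)
  also have "\<dots> \<le> (\<Sum>i\<in>(UNIV::'n set). T)" using assms by (intro sum_mono)
  finally show ?thesis by simp
qed

lemma entrywise_l1_norm_le_card_mult:
  fixes H :: "real^'m^'n"
  assumes "\<And>i j. \<bar>H $ i $ j\<bar> \<le> T"
  shows "entrywise_l1_norm H \<le> real CARD('n) * real CARD('m) * T"
proof -
  have "entrywise_l1_norm H \<le> (\<Sum>i\<in>(UNIV::'n set). \<Sum>j\<in>(UNIV::'m set). T)"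
    unfolding entrywise_l1_norm_def using assms by (intro sum_mono)
  then show ?thesis by simp
qed

lemma exp_neg_sq_ratio_le:
  fixes sg \<delta> :: real
  assumes "0 < sg" "0 < \<delta>"
  shows "exp (- (\<delta> / sg)\<^sup>2 / 8) \<le> 256 * sg^4 / \<delta>^4"
proof -
  define t where "t = (\<delta> / sg)\<^sup>2 / 8"
  have "t > 0" using assms by (simp add: t_def)
  then have "(1 + t / real 2) ^ 2 \<le> exp t"
    by (intro exp_ge_one_plus_x_over_n_power_n) auto
  moreover have "t\<^sup>2 / 4 \<le> (1 + t / 2)\<^sup>2"
    using \<open>t > 0\<close> by (simp add: power2_eq_square field_simps)
  ultimately have "t\<^sup>2 * exp (- t) \<le> 4"
    by (simp add: exp_minus field_simps)
  then have "exp (- t) \<le> 4 / t\<^sup>2"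
    using \<open>t > 0\<close> by (simp add: field_simps)
  also have "4 / t\<^sup>2 = 256 * sg^4 / \<delta>^4"
    using assms by (simp add: t_def field_simps power2_eq_square power4_eq_xxxx)
  finally show ?thesis by (simp add: t_def)
qed

lemma gauss_tail_le_linear:
  fixes A d sg \<delta> :: real
  assumes "0 \<le> A" "1 \<le> d" "0 < sg" "sg \<le> 1" "0 < \<delta>"
  defines "K \<equiv> d\<^sup>2 * A * 256 / \<delta>^4"
  shows "d * (A * exp (- (\<delta> / sg)\<^sup>2 / 8) / sg) \<le> K * sg"
    and "d\<^sup>2 * (A * exp (- (\<delta> / sg)\<^sup>2 / 8) / sg\<^sup>2) \<le> K * sg"
proof -
  have K: "0 \<le> K" using assms by (simp add: K_def)
  have tail: "A * exp (- (\<delta> / sg)\<^sup>2 / 8) \<le> A * (256 * sg^4 / \<delta>^4)"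
    using exp_neg_sq_ratio_le[OF \<open>0 < sg\<close> \<open>0 < \<delta>\<close>] \<open>0 \<le> A\<close> by (rule mult_left_mono)
  have "d * (A * exp (- (\<delta> / sg)\<^sup>2 / 8) / sg) \<le> d\<^sup>2 * (A * exp (- (\<delta> / sg)\<^sup>2 / 8) / sg)"
    using assms by (intro mult_right_mono) (auto simp: power2_eq_square)
  also have "\<dots> \<le> d\<^sup>2 * (A * (256 * sg^4 / \<delta>^4) / sg)"
    using \<open>0 < sg\<close> by (intro mult_left_mono[OF divide_right_mono[OF tail]]) auto
  also have "\<dots> = K * sg^3"
    using assms by (simp add: K_def field_simps power_eq_if)
  also have "\<dots> \<le> K * sg"
    using K assms by (intro mult_left_mono) (auto simp: power_le_one power_eq_if mult_le_one)
  finally show "d * (A * exp (- (\<delta> / sg)\<^sup>2 / 8) / sg) \<le> K * sg" .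
  have "d\<^sup>2 * (A * exp (- (\<delta> / sg)\<^sup>2 / 8) / sg\<^sup>2) \<le> d\<^sup>2 * (A * (256 * sg^4 / \<delta>^4) / sg\<^sup>2)"
    using \<open>0 < sg\<close> by (intro mult_left_mono[OF divide_right_mono[OF tail]]) auto
  also have "\<dots> = K * sg\<^sup>2"
    using assms by (simp add: K_def field_simps power_eq_if power2_eq_square)
  also have "\<dots> \<le> K * sg"
    using K assms by (intro mult_left_mono) (auto simp: power2_eq_square mult_le_one)
  finally show "d\<^sup>2 * (A * exp (- (\<delta> / sg)\<^sup>2 / 8) / sg\<^sup>2) \<le> K * sg" .
qed

lemma smoothed_obj_gradient_hessian_linear_bound:
  fixes psi :: "real^'n \<Rightarrow> real" and xs :: "real^'n"
  assumes psi_le: "\<And>y. \<bar>psi y\<bar> \<le> b" and "\<delta> > 0"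
    and local_min: "\<And>y. norm (y - xs) \<le> \<delta> \<Longrightarrow> psi xs \<le> psi y"
  obtains K where "\<And>sg. 0 < sg \<Longrightarrow> sg \<le> 1 \<Longrightarrow> \<exists>G H. has_gradient_hessian (smoothed_obj psi xs sg) G H xs
      \<and> norm (G xs) \<le> K * sg \<and> entrywise_l1_norm H \<le> K * sg"
proof (cases "(\<lambda>y. min (psi y) (psi xs)) \<in> borel_measurable borel")
  case False
  show thesis
  proof (rule that[of 0])
    fix sg :: real assume "0 < sg"
    then show "\<exists>G H. has_gradient_hessian (smoothed_obj psi xs sg) G H xs
        \<and> norm (G xs) \<le> 0 * sg \<and> entrywise_l1_norm H \<le> 0 * sg"
      using has_gradient_hessian_smoothed_obj_if_not_measurable[OF False]
      by (intro exI[of _ "\<lambda>_. 0"] exI[of _ 0]) (simp add: entrywise_l1_norm_def)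
  qed
next
  case True
  define A where "A = (2 * pi) powr (- real CARD('n) / 2) * (2 * b) * 100
      * (\<integral>v. exp (- (norm (v::real^'n))\<^sup>2 / 8) \<partial>lborel)"
  define d where "d = real CARD('n)"
  have "0 \<le> A"
    using psi_le[of xs] unfolding A_def by (intro mult_nonneg_nonneg integral_nonneg_AE) auto
  have "1 \<le> d" by (simp add: d_def)
  show thesis
  proof (rule that[of "d\<^sup>2 * A * 256 / \<delta>^4"])
    fix sg :: real assume "0 < sg" "sg \<le> 1"
    obtain G H where "has_gradient_hessian (smoothed_obj psi xs sg) G H xs"
      and G: "\<And>j. \<bar>G xs $ j\<bar> \<le> A * exp (- (\<delta> / sg)\<^sup>2 / 8) / sg"
      and H: "\<And>i j. \<bar>H $ i $ j\<bar> \<le> A * exp (- (\<delta> / sg)\<^sup>2 / 8) / sg\<^sup>2"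
      using smoothed_obj_gradient_hessian_tail[OF True psi_le \<open>\<delta> > 0\<close> local_min \<open>0 < sg\<close>]
      unfolding A_def by blast
    moreover have "norm (G xs) \<le> d\<^sup>2 * A * 256 / \<delta>^4 * sg"
      using norm_le_card_mult[OF G]
        gauss_tail_le_linear(1)[OF \<open>0 \<le> A\<close> \<open>1 \<le> d\<close> \<open>0 < sg\<close> \<open>sg \<le> 1\<close> \<open>\<delta> > 0\<close>]
      by (simp add: d_def)
    moreover have "entrywise_l1_norm H \<le> d\<^sup>2 * A * 256 / \<delta>^4 * sg"
      using entrywise_l1_norm_le_card_mult[OF H]
        gauss_tail_le_linear(2)[OF \<open>0 \<le> A\<close> \<open>1 \<le> d\<close> \<open>0 < sg\<close> \<open>sg \<le> 1\<close> \<open>\<delta> > 0\<close>]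
      by (simp add: d_def power2_eq_square)
    ultimately show "\<exists>G H. has_gradient_hessian (smoothed_obj psi xs sg) G H xs
        \<and> norm (G xs) \<le> d\<^sup>2 * A * 256 / \<delta>^4 * sg \<and> entrywise_l1_norm H \<le> d\<^sup>2 * A * 256 / \<delta>^4 * sg"
      by blast
  qed
qed

theorem lemma5p1:
  fixes psi :: "real ^ 'n \<Rightarrow> real" and xs :: "real ^ 'n" and b \<delta> :: real
  assumes "b > 0" and "\<forall>x. \<bar>psi x\<bar> \<le> b"
    and "\<delta> > 0" and "\<forall>x. norm (x - xs) \<le> \<delta> \<longrightarrow> psi xs \<le> psi x"
  shows "\<forall>eps > 0. \<exists>sig_star > 0. \<forall>sg. 0 < sg \<and> sg \<le> sig_star \<longrightarrow>
           approx_local_min psi eps sg xs"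
proof (intro allI impI)
  fix eps :: real assume "eps > 0"
  obtain K where K: "\<And>sg. 0 < sg \<Longrightarrow> sg \<le> 1 \<Longrightarrow> \<exists>G H. has_gradient_hessian (smoothed_obj psi xs sg) G H xs
      \<and> norm (G xs) \<le> K * sg \<and> entrywise_l1_norm H \<le> K * sg"
    using smoothed_obj_gradient_hessian_linear_bound[of psi b \<delta> xs] assms by auto
  define sig_star where "sig_star = min 1 (min eps (sqrt eps) / (\<bar>K\<bar> + 1))"
  have "approx_local_min psi eps sg xs" if "0 < sg" "sg \<le> sig_star" for sg
  proof -
    have pos: "0 < \<bar>K\<bar> + 1" using abs_ge_zero[of K] by linarith
    have "K * sg \<le> (\<bar>K\<bar> + 1) * sg" using that by (intro mult_right_mono) auto
    also have "\<dots> \<le> min eps (sqrt eps)"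
      using that pos by (simp add: sig_star_def le_divide_eq mult.commute)
    finally have "K * sg \<le> eps" "K * sg \<le> sqrt eps" by simp_all
    moreover have "sg \<le> 1" using that by (simp add: sig_star_def)
    then obtain G H where "has_gradient_hessian (smoothed_obj psi xs sg) G H xs"
      "norm (G xs) \<le> K * sg" "entrywise_l1_norm H \<le> K * sg"
      using K[OF \<open>0 < sg\<close>] by auto
    ultimately show ?thesis
      by (intro approx_local_min_if_gradient_hessian_small) auto
  qed
  moreover have "0 < sig_star" using \<open>eps > 0\<close> by (simp add: sig_star_def)
  ultimately show "\<exists>sig_star > 0. \<forall>sg. 0 < sg \<and> sg \<le> sig_star \<longrightarrow> approx_local_min psi eps sg xs"
    by blast
qed

end
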